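(* Let $F$ be a unit tree and let $!E,G,H$ be units of $F$. If $!E$ dominates $G$ in $F$ and $H$ is a subunit of $G$, then $!E$ dominates $H$ in $F$.
   Context: Formulas are built from atoms by $\neg$ (on atoms only), binary $\wedge,\vee$ and unary $!$ (branching recurrence) and $?$ (branching corecurrence). Fix a formula $\mathbb{F}_0$. Oformulas are occurrences of subformulas of $\mathbb{F}_0$. Politerals are occurrences of literals $P$ or $\neg P$ that are not in the scope of $\neg$; thus an atom $P$ inside $\neg P$ is not a politeral. The modal depth of an oformula is the number of its proper superoccurrences of the form $!E$ or $?E$. A unit is $E[\vec x]$, with $E$ an oformula and $\vec x$ a tuple of infinite bitstrings whose length is the modal depth of $E$. Parenthood: - $G_0[\vec x]$ and $G_1[\vec x]$ are the children of $(G_0\wedge G_1)[\vec x]$ and of $(G_0\vee G_1)[\vec x]$; - the $G[\vec x,y]$, for all infinite bitstrings $y$, are the children of $!G[\vec x]$ and of $?G[\vec x]$. The root is $\mathbb{F}_0[\,]$. "Subunit" and "superunit" are the reflexive-transitive closures of the child relation and its converse, and "proper" means distinct. The $\mathbb{F}_0$-origin $\tilde E$ of $E[\vec x]$ is $E$. $!$-, $?$-, $\wedge$-, $\vee$- and politeral units are those whose origin is of the corresponding form. The smallest common superunit of two units is their common superunit that is a subunit of all their common superunits. $E$ drives $G$ through $H$ iff $H$ is the smallest common superunit of $E,G$ and no proper $?$-superunit of $E$ is a subunit of $H$. A unit tree is a nonempty set $S$ of units such that, for each $E\in S$: all superunits of $E$ are in $S$; if $E$ is a $\wedge$- or $\vee$-unit,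 both children of $E$ are in $S$; and if $E$ is a $!$- or $?$-unit, at least one child of $E$ is in $S$. Runs are sequences of labeled moves $\wp\beta$ with $\wp\in\{\top,\bot\}$. For a run $\Theta$ and a string $\alpha$, $\Theta^{\alpha}$ is obtained by keeping only the labmoves whose move begins with $\alpha$ and deleting that prefix. For an infinite bitstring $y$, $\Theta^{\preceq y}$ is obtained by keeping only the labmoves of the form $\wp\, u.\beta$ with $u$ a finite prefix of $y$ and deleting the prefix "$u.$". Fix an arbitrary run $\Omega$. The projection of $\Omega$ on units is defined as follows: on $\mathbb{F}_0[\,]$ it is $\Omega$; if $\Theta$ is the projection on $E[\vec x]$, then the projection on the child $G_i[\vec x]$ of a $\wedge$- or $\vee$-unit is $\Theta^{i.}$, and on the child $G[\vec x,y]$ of a $!$- or $?$-unit it is $\Theta^{\preceq y}$. Politeral units $L,M$ are opposite iff $\tilde L=\neg\tilde M$ (or $\tilde M=\neg\tilde L$) as literals and, for each $\wp\in\{\top,\bot\}$, the set of $\wp$-labeled moves in the projection of $\Omega$ on $L$ equals the set of $\neg\wp$-labeled moves in the projection of $\Omega$ on $M$. For a unit tree $F$ and $!E,G\in F$, a $!E$-over-$G$ domination chain in $F$ is a sequence $L_1,M_1,X_1,\dots,L_n,M_n,X_n$ ($n\ge1$) of units such that, writing $L_{n+1}=G$, for each $i\in\{1,\dots,n\}$: 1. $L_i$ and $M_i$ are opposite politeral units of $F$; 2. $M_i$ drives $L_{i+1}$ through $X_i$; 3. $M_i$ drives no $L_j$ with $i+2\le j\le n+1$; 4. $M_i$ is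 not a subunit of $!E$; 5. $L_1$ is a subunit of $!E$. $!E$ dominates $G$ in $F$ iff $!E,G\in F$ and either $G$ is a proper subunit of $!E$ or there exists a $!E$-over-$G$ domination chain in $F$. *)

theory Defs
  imports Main
begin

datatype 'a fm = Atom 'a | Neg 'a | Conj "'a fm" "'a fm" | Disj "'a fm" "'a fm"
  | Ofc "'a fm"   (* branching recurrence ! *)
  | Whynot "'a fm" (* branching corecurrence ? *)

text \<open>Oformulas (occurrences of subformulas of F0) are positions (paths) in F0.
  The atom P inside Neg P is the occurrence at the position extended by 0.\<close>

fun subfm :: "'a fm \<Rightarrow> nat list \<Rightarrow> 'a fm option" where
  "subfm f [] = Some f"
| "subfm (Atom a) (i # p) = None"
| "subfm (Neg a) (i # p) = (if i = 0 then subfm (Atom a) p else None)"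
| "subfm (Conj f g) (i # p) = (if i = 0 then subfm f p else if i = 1 then subfm g p else None)"
| "subfm (Disj f g) (i # p) = (if i = 0 then subfm f p else if i = 1 then subfm g p else None)"
| "subfm (Ofc f) (i # p) = (if i = 0 then subfm f p else None)"
| "subfm (Whynot f) (i # p) = (if i = 0 then subfm f p else None)"

definition is_occ :: "'a fm \<Rightarrow> nat list \<Rightarrow> bool" where
  "is_occ F0 p \<longleftrightarrow> subfm F0 p \<noteq> None"

definition is_modal_fm :: "'a fm \<Rightarrow> bool" where
  "is_modal_fm f \<longleftrightarrow> (\<exists>g. f = Ofc g \<or> f = Whynot g)"

definition mdepth :: "'a fm \<Rightarrow> nat list \<Rightarrow> nat" where
  "mdepth F0 p = card {k. k < length p \<and> (\<exists>f. subfm F0 (take k p) = Some f \<and> is_modal_fm f)}"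

type_synonym bitstr = "nat \<Rightarrow> bool"
type_synonym unit = "nat list \<times> bitstr list"

definition is_unit :: "'a fm \<Rightarrow> unit \<Rightarrow> bool" where
  "is_unit F0 u \<longleftrightarrow> is_occ F0 (fst u) \<and> length (snd u) = mdepth F0 (fst u)"

definition origin :: "'a fm \<Rightarrow> unit \<Rightarrow> 'a fm" where
  "origin F0 u = the (subfm F0 (fst u))"

definition root_unit :: unit where
  "root_unit = ([], [])"

definition child :: "'a fm \<Rightarrow> unit \<Rightarrow> unit \<Rightarrow> bool" where
  "child F0 c u \<longleftrightarrow> is_unit F0 u \<and>
     ((\<exists>G0 G1. origin F0 u = Conj G0 G1 \<or> origin F0 u = Disj G0 G1) \<and>
        (\<exists>i\<in>{0,1}. c = (fst u @ [i], snd u))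
    \<or> (\<exists>G. origin F0 u = Ofc G \<or> origin F0 u = Whynot G) \<and>
        (\<exists>y. c = (fst u @ [0], snd u @ [y])))"

definition subunit :: "'a fm \<Rightarrow> unit \<Rightarrow> unit \<Rightarrow> bool" where
  "subunit F0 u v \<longleftrightarrow> is_unit F0 u \<and> is_unit F0 v \<and> (child F0)\<^sup>*\<^sup>* u v"

definition proper_subunit :: "'a fm \<Rightarrow> unit \<Rightarrow> unit \<Rightarrow> bool" where
  "proper_subunit F0 u v \<longleftrightarrow> subunit F0 u v \<and> u \<noteq> v"

definition bang_unit :: "'a fm \<Rightarrow> unit \<Rightarrow> bool" where
  "bang_unit F0 u \<longleftrightarrow> is_unit F0 u \<and> (\<exists>G. origin F0 u = Ofc G)"

definition quest_unit :: "'a fm \<Rightarrow> unit \<Rightarrow> bool" where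
  "quest_unit F0 u \<longleftrightarrow> is_unit F0 u \<and> (\<exists>G. origin F0 u = Whynot G)"

definition politeral_unit :: "'a fm \<Rightarrow> unit \<Rightarrow> bool" where
  "politeral_unit F0 u \<longleftrightarrow> is_unit F0 u \<and>
     (\<exists>a. origin F0 u = Atom a \<or> origin F0 u = Neg a) \<and>
     \<not> (\<exists>q a. fst u = q @ [0] \<and> subfm F0 q = Some (Neg a))"

definition smallest_common_superunit :: "'a fm \<Rightarrow> unit \<Rightarrow> unit \<Rightarrow> unit \<Rightarrow> bool" where
  "smallest_common_superunit F0 E G H \<longleftrightarrow>
     subunit F0 E H \<and> subunit F0 G H \<and>
     (\<forall>K. subunit F0 E K \<and> subunit F0 G K \<longrightarrow> subunit F0 H K)"

definition drives :: "'a fm \<Rightarrow> unit \<Rightarrow> unit \<Rightarrow> unit \<Rightarrow> bool" where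
  "drives F0 E G H \<longleftrightarrow> smallest_common_superunit F0 E G H \<and>
     \<not> (\<exists>K. quest_unit F0 K \<and> proper_subunit F0 E K \<and> subunit F0 K H)"

definition unit_tree :: "'a fm \<Rightarrow> unit set \<Rightarrow> bool" where
  "unit_tree F0 S \<longleftrightarrow> S \<noteq> {} \<and> (\<forall>E\<in>S. is_unit F0 E) \<and>
     (\<forall>E\<in>S.
        (\<forall>K. subunit F0 E K \<longrightarrow> K \<in> S) \<and>
        ((\<exists>G0 G1. origin F0 E = Conj G0 G1 \<or> origin F0 E = Disj G0 G1) \<longrightarrow>
            (\<forall>c. child F0 c E \<longrightarrow> c \<in> S)) \<and>
        ((\<exists>G. origin F0 E = Ofc G \<or> origin F0 E = Whynot G) \<longrightarrow>
            (\<exists>c. child F0 c E \<and> c \<in> S)))"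

text \<open>A labeled move is (label, move) with label True for \<top> and False for \<bottom>;
  moves are strings. A (finite or infinite) run is a partial sequence with
  downward closed domain.\<close>
type_synonym labmove = "bool \<times> string"
type_synonym run = "nat \<Rightarrow> labmove option"

definition is_run :: "run \<Rightarrow> bool" where
  "is_run \<Theta> \<longleftrightarrow> (\<forall>i. \<Theta> i = None \<longrightarrow> \<Theta> (Suc i) = None)"

definition run_set :: "run \<Rightarrow> labmove set" where
  "run_set \<Theta> = {lm. \<exists>i. \<Theta> i = Some lm}"

text \<open>Keep (in order) the labmoves on which g is defined, transforming them by g.\<close>
definition subseq_map :: "(labmove \<Rightarrow> labmove option) \<Rightarrow> run \<Rightarrow> run" where
  "subseq_map g \<Theta> n =
     (let keep = (\<lambda>i. \<exists>v. \<Theta> i = Some v \<and> g v \<noteq> None) in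
      if \<exists>i. keep i \<and> card {j. j < i \<and> keep j} = n
      then g (the (\<Theta> (THE i. keep i \<and> card {j. j < i \<and> keep j} = n)))
      else None)"

definition restr_prefix :: "string \<Rightarrow> run \<Rightarrow> run" where
  "restr_prefix \<alpha> \<Theta> = subseq_map
     (\<lambda>(w, m). if take (length \<alpha>) m = \<alpha> then Some (w, drop (length \<alpha>) m) else None) \<Theta>"

definition bitchar :: "bool \<Rightarrow> char" where
  "bitchar b = (if b then CHR ''1'' else CHR ''0'')"

definition finite_prefix_of :: "string \<Rightarrow> bitstr \<Rightarrow> bool" where
  "finite_prefix_of u y \<longleftrightarrow> (\<forall>i<length u. u ! i = bitchar (y i))"

text \<open>Theta^{\<preceq> y}: keep labmoves of the form u.beta with u a finite prefix of y,
  deleting u. (u consists of bits, so it is determined as the part before the first dot.)\<close>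
definition restr_branch :: "bitstr \<Rightarrow> run \<Rightarrow> run" where
  "restr_branch y \<Theta> = subseq_map
     (\<lambda>(w, m). if (\<exists>u \<beta>. m = u @ CHR ''.'' # \<beta> \<and> finite_prefix_of u y)
               then Some (w, (THE \<beta>. \<exists>u. m = u @ CHR ''.'' # \<beta> \<and> finite_prefix_of u y))
               else None) \<Theta>"

text \<open>proj f p xs Theta: projection along position p (with bitstrings xs, outermost first)
  starting from the projection Theta on the unit with origin f.\<close>
fun proj :: "'a fm \<Rightarrow> nat list \<Rightarrow> bitstr list \<Rightarrow> run \<Rightarrow> run" where
  "proj f [] xs \<Theta> = \<Theta>"
| "proj (Conj f g) (i # p) xs \<Theta> =
     (if i = 0 then proj f p xs (restr_prefix ''0.'' \<Theta>) else proj g p xs (restr_prefix ''1.'' \<Theta>))"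
| "proj (Disj f g) (i # p) xs \<Theta> =
     (if i = 0 then proj f p xs (restr_prefix ''0.'' \<Theta>) else proj g p xs (restr_prefix ''1.'' \<Theta>))"
| "proj (Ofc f) (i # p) (y # xs) \<Theta> = proj f p xs (restr_branch y \<Theta>)"
| "proj (Whynot f) (i # p) (y # xs) \<Theta> = proj f p xs (restr_branch y \<Theta>)"
| "proj f (i # p) xs \<Theta> = \<Theta>"

definition projection :: "'a fm \<Rightarrow> run \<Rightarrow> unit \<Rightarrow> run" where
  "projection F0 \<Omega> u = proj F0 (fst u) (snd u) \<Omega>"

definition opposite :: "'a fm \<Rightarrow> run \<Rightarrow> unit \<Rightarrow> unit \<Rightarrow> bool" where
  "opposite F0 \<Omega> L M \<longleftrightarrow> politeral_unit F0 L \<and> politeral_unit F0 M \<and>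
     (\<exists>a. (origin F0 L = Atom a \<and> origin F0 M = Neg a) \<or> (origin F0 L = Neg a \<and> origin F0 M = Atom a)) \<and>
     (\<forall>w. {\<beta>. (w, \<beta>) \<in> run_set (projection F0 \<Omega> L)} =
          {\<beta>. (\<not> w, \<beta>) \<in> run_set (projection F0 \<Omega> M)})"

text \<open>A chain L1,M1,X1,...,Ln,Mn,Xn is a list of n triples; L_{n+1} = G.\<close>
definition dom_chain :: "'a fm \<Rightarrow> run \<Rightarrow> unit set \<Rightarrow> unit \<Rightarrow> unit \<Rightarrow> (unit \<times> unit \<times> unit) list \<Rightarrow> bool" where
  "dom_chain F0 \<Omega> F E G ch \<longleftrightarrow>
     (let n = length ch;
          L = (\<lambda>i. if i < n then fst (ch ! i) else G);
          M = (\<lambda>i. fst (snd (ch ! i)));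
          X = (\<lambda>i. snd (snd (ch ! i)))
      in n \<ge> 1 \<and>
         (\<forall>i<n. L i \<in> F \<and> M i \<in> F \<and> opposite F0 \<Omega> (L i) (M i) \<and>
                drives F0 (M i) (L (Suc i)) (X i) \<and>
                (\<forall>j. i + 2 \<le> j \<and> j \<le> n \<longrightarrow> \<not> (\<exists>K. drives F0 (M i) (L j) K)) \<and>
                \<not> subunit F0 (M i) E) \<and>
         subunit F0 (L 0) E)"

definition dominates :: "'a fm \<Rightarrow> run \<Rightarrow> unit set \<Rightarrow> unit \<Rightarrow> unit \<Rightarrow> bool" where
  "dominates F0 \<Omega> F E G \<longleftrightarrow> bang_unit F0 E \<and> E \<in> F \<and> G \<in> F \<and>
     (proper_subunit F0 G E \<or> (\<exists>ch. dom_chain F0 \<Omega> F E G ch))"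

end

theory Submission
  imports Defs
begin

(* If !E dominates G because G is a proper subunit of !E, then so is every
   subunit H of G, by transitivity and antisymmetry of the subunit order.
   Otherwise there is a chain L_1,M_1,X_1,...,L_n,M_n,X_n ending in G.  Since
   M_n drives G through X_n, and H lies below G, M_n also drives H (through the
   smallest common superunit of M_n and H, which lies below X_n).  Let i be the
   least index such that M_i drives H, say through K; then
   L_1,M_1,X_1,...,L_i,M_i,K is a !E-over-H chain: all conditions on the first
   i-1 triples are inherited, and condition 3 for the new last element H holds
   by minimality of i. *)

lemma child_length: "child F0 c u \<Longrightarrow> length (fst c) = Suc (length (fst u))"
  unfolding child_def by auto

text \<open>Every unit has at most one parent: the position of the parent is that
  of the child with the last step removed, and the parent's bitstrings are
  determined by its origin.\<close>
lemma child_parent_unique: "child F0 c u \<Longrightarrow> child F0 c v \<Longrightarrow> u = v"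
proof -
  assume cu: "child F0 c u" and cv: "child F0 c v"
  have pos_u: "fst u = butlast (fst c)" and pos_v: "fst v = butlast (fst c)"
    using cu cv unfolding child_def by auto
  then have "origin F0 u = origin F0 v" unfolding origin_def by simp
  then have "snd u = snd v"
    using cu cv unfolding child_def by (auto simp: prod_eq_iff)
  then show "u = v" using pos_u pos_v by (simp add: prod_eq_iff)
qed

lemma functional_rtranclp_comparable:
  assumes functional: "\<And>x y z. R x y \<Longrightarrow> R x z \<Longrightarrow> y = z"
  shows "R\<^sup>*\<^sup>* a b \<Longrightarrow> R\<^sup>*\<^sup>* a c \<Longrightarrow> R\<^sup>*\<^sup>* b c \<or> R\<^sup>*\<^sup>* c b"
proof (induction arbitrary: c rule: converse_rtranclp_induct)
  case base
  then show ?case by simp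
next
  case (step a a')
  from step.prems show ?case
  proof (cases rule: converse_rtranclpE)
    case base
    then show ?thesis using step.hyps by (meson converse_rtranclp_into_rtranclp)
  next
    case (step a'')
    then have "a'' = a'" using functional \<open>R a a'\<close> by blast
    then show ?thesis using step.IH step by blast
  qed
qed

lemma child_rtranclp_length:
  "(child F0)\<^sup>*\<^sup>* u v \<Longrightarrow> length (fst v) \<le> length (fst u) \<and> (length (fst v) = length (fst u) \<longrightarrow> u = v)"
proof (induction rule: converse_rtranclp_induct)
  case base
  then show ?case by simp
next
  case (step y z)
  then show ?case using child_length[OF step.hyps(1)] by auto
qed

lemma subunit_trans: "subunit F0 a b \<Longrightarrow> subunit F0 b c \<Longrightarrow> subunit F0 a c"
  unfolding subunit_def by auto

lemma subunit_antisym: "subunit F0 a b \<Longrightarrow> subunit F0 b a \<Longrightarrow> a = b"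
  unfolding subunit_def using child_rtranclp_length by (metis le_antisym)

lemma proper_subunit_subunit_trans:
  assumes "subunit F0 H G" and "proper_subunit F0 G E"
  shows "proper_subunit F0 H E"
proof -
  have "subunit F0 H E" using assms subunit_trans unfolding proper_subunit_def by blast
  moreover have "H \<noteq> E"
  proof
    assume "H = E"
    then have "G = E" using assms subunit_antisym unfolding proper_subunit_def by blast
    then show False using assms(2) unfolding proper_subunit_def by blast
  qed
  ultimately show ?thesis unfolding proper_subunit_def by blast
qed

text \<open>Two units with a common superunit have a smallest common superunit:
  take a deepest common superunit; since the superunits of H form a chain,
  it lies below every other common superunit.\<close>
lemma smallest_common_superunit_exists:
  assumes "subunit F0 M X" "subunit F0 H X"
  shows "\<exists>K. smallest_common_superunit F0 M H K"
proof -
  let ?common = "\<lambda>K. subunit F0 M K \<and> subunit F0 H K"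
  have "\<forall>K. ?common K \<longrightarrow> length (fst K) < Suc (length (fst H))"
    using child_rtranclp_length unfolding subunit_def by (metis less_Suc_eq_le)
  then obtain K where K: "?common K"
    and deepest: "\<forall>K'. ?common K' \<longrightarrow> length (fst K') \<le> length (fst K)"
    using ex_has_greatest_nat[of ?common X "\<lambda>K. length (fst K)"] assms by blast
  have "subunit F0 K K'" if K': "?common K'" for K'
  proof -
    have "(child F0)\<^sup>*\<^sup>* K K' \<or> (child F0)\<^sup>*\<^sup>* K' K"
      using functional_rtranclp_comparable[of "child F0" H K K'] child_parent_unique K K'
      unfolding subunit_def by blast
    moreover have "K' = K" if "(child F0)\<^sup>*\<^sup>* K' K"
      using child_rtranclp_length[OF that] deepest K' by fastforce
    ultimately show ?thesis using K K' unfolding subunit_def by blast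
  qed
  then show ?thesis using K unfolding smallest_common_superunit_def by blast
qed

text \<open>If M drives G through X and H is a subunit of G, then M drives H: the
  smallest common superunit K of M and H lies below X, so no ?-superunit of M
  can sit below K without sitting below X.\<close>
lemma drives_subunit:
  assumes "drives F0 M G X" "subunit F0 H G"
  shows "\<exists>K. drives F0 M H K"
proof -
  have MX: "subunit F0 M X" and GX: "subunit F0 G X"
    using assms(1) unfolding drives_def smallest_common_superunit_def by auto
  have HX: "subunit F0 H X" using subunit_trans[OF assms(2) GX] .
  obtain K where K: "smallest_common_superunit F0 M H K"
    using smallest_common_superunit_exists[OF MX HX] by blast
  have "subunit F0 K X" using K MX HX unfolding smallest_common_superunit_def by blast
  then have "\<not> (\<exists>Q. quest_unit F0 Q \<and> proper_subunit F0 M Q \<and> subunit F0 Q K)"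
    using assms(1) subunit_trans unfolding drives_def by blast
  then show ?thesis using K unfolding drives_def by blast
qed

definition chain_L :: "(unit \<times> unit \<times> unit) list \<Rightarrow> unit \<Rightarrow> nat \<Rightarrow> unit" where
  "chain_L ch G i = (if i < length ch then fst (ch ! i) else G)"

definition chain_M :: "(unit \<times> unit \<times> unit) list \<Rightarrow> nat \<Rightarrow> unit" where
  "chain_M ch i = fst (snd (ch ! i))"

definition chain_X :: "(unit \<times> unit \<times> unit) list \<Rightarrow> nat \<Rightarrow> unit" where
  "chain_X ch i = snd (snd (ch ! i))"

lemma dom_chain_iff:
  "dom_chain F0 \<Omega> F E G ch \<longleftrightarrow> length ch \<ge> 1 \<and>
     (\<forall>i<length ch. chain_L ch G i \<in> F \<and> chain_M ch i \<in> F \<and>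
        opposite F0 \<Omega> (chain_L ch G i) (chain_M ch i) \<and>
        drives F0 (chain_M ch i) (chain_L ch G (Suc i)) (chain_X ch i) \<and>
        (\<forall>j. i + 2 \<le> j \<and> j \<le> length ch \<longrightarrow> \<not> (\<exists>K. drives F0 (chain_M ch i) (chain_L ch G j) K)) \<and>
        \<not> subunit F0 (chain_M ch i) E) \<and>
     subunit F0 (chain_L ch G 0) E"
  unfolding dom_chain_def Let_def chain_L_def chain_M_def chain_X_def by simp

lemma dom_chain_truncate:
  assumes chain: "dom_chain F0 \<Omega> F E G ch"
    and i: "i < length ch"
    and drives_H: "drives F0 (chain_M ch i) H K"
    and earlier: "\<And>k. k < i \<Longrightarrow> \<not> (\<exists>K. drives F0 (chain_M ch k) H K)"
  shows "dom_chain F0 \<Omega> F E H (take i ch @ [(chain_L ch G i, chain_M ch i, K)])"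
    (is "dom_chain F0 \<Omega> F E H ?ch")
proof -
  have len: "length ?ch = Suc i" using i by simp
  have L_eq: "chain_L ?ch H k = chain_L ch G k" if "k \<le> i" for k
    using that i unfolding chain_L_def by (auto simp: nth_append)
  have L_last: "chain_L ?ch H (Suc i) = H" unfolding chain_L_def by simp
  have M_eq: "chain_M ?ch k = chain_M ch k" if "k \<le> i" for k
    using that i unfolding chain_M_def by (auto simp: nth_append)
  have X_eq: "chain_X ?ch k = (if k < i then chain_X ch k else K)" if "k \<le> i" for k
    using that i unfolding chain_X_def by (auto simp: nth_append)
  note old = chain[unfolded dom_chain_iff]
  show ?thesis unfolding dom_chain_iff len
  proof (intro conjI allI impI)
    fix k assume "k < Suc i"
    then have ki: "k \<le> i" and kn: "k < length ch" using i by auto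
    show "chain_L ?ch H k \<in> F" "chain_M ?ch k \<in> F"
      "opposite F0 \<Omega> (chain_L ?ch H k) (chain_M ?ch k)" "\<not> subunit F0 (chain_M ?ch k) E"
      using old kn L_eq[OF ki] M_eq[OF ki] by auto
    show "drives F0 (chain_M ?ch k) (chain_L ?ch H (Suc k)) (chain_X ?ch k)"
    proof (cases "k < i")
      case True
      then show ?thesis using old kn L_eq[of "Suc k"] M_eq[OF ki] X_eq[OF ki] by auto
    next
      case False
      then show ?thesis using ki drives_H L_last M_eq X_eq by auto
    qed
    fix j assume j: "k + 2 \<le> j \<and> j \<le> Suc i"
    show "\<not> (\<exists>K. drives F0 (chain_M ?ch k) (chain_L ?ch H j) K)"
    proof (cases "j = Suc i")
      case True
      then show ?thesis using earlier[of k] j L_last M_eq[OF ki] by auto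
    next
      case False
      then show ?thesis using old kn j i L_eq[of j] M_eq[OF ki] by auto
    qed
  qed (use old L_eq in auto)
qed

text \<open>A !E-over-G chain yields a !E-over-H chain for every subunit H of G:
  the last M drives G, hence H, so there is a least index i at which M_i
  drives H, and the chain is truncated there.\<close>
lemma dom_chain_subunit:
  assumes chain: "dom_chain F0 \<Omega> F E G ch" and HG: "subunit F0 H G"
  shows "\<exists>ch'. dom_chain F0 \<Omega> F E H ch'"
proof -
  let ?drives_H = "\<lambda>i. i < length ch \<and> (\<exists>K. drives F0 (chain_M ch i) H K)"
  note old = chain[unfolded dom_chain_iff]
  define n where "n = length ch"
  have "n - 1 < n" and "Suc (n - 1) = n" using old n_def by auto
  moreover have "chain_L ch G n = G" unfolding chain_L_def n_def by simp
  ultimately have "drives F0 (chain_M ch (n - 1)) G (chain_X ch (n - 1))"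
    using old n_def by metis
  then have "?drives_H (n - 1)"
    using drives_subunit HG \<open>n - 1 < n\<close> n_def by blast
  define i where "i = (LEAST i. ?drives_H i)"
  have least: "?drives_H i" using \<open>?drives_H (n - 1)\<close> unfolding i_def by (rule LeastI)
  have before: "\<not> (\<exists>K. drives F0 (chain_M ch k) H K)" if "k < i" for k
    using not_less_Least[of k ?drives_H] that least unfolding i_def by auto
  from least obtain K where "drives F0 (chain_M ch i) H K" by blast
  with dom_chain_truncate[OF chain] least before show ?thesis by blast
qed

theorem lemma8p3:
  fixes F0 :: "'a fm" and \<Omega> :: run and F :: "unit set" and E G H :: unit
  assumes "is_run \<Omega>"
    and "unit_tree F0 F"
    and "bang_unit F0 E" and "E \<in> F" and "G \<in> F" and "H \<in> F"
    and "dominates F0 \<Omega> F E G"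
    and "subunit F0 H G"
  shows "dominates F0 \<Omega> F E H"
proof -
  from assms(7) have "proper_subunit F0 G E \<or> (\<exists>ch. dom_chain F0 \<Omega> F E G ch)"
    unfolding dominates_def by blast
  then have "proper_subunit F0 H E \<or> (\<exists>ch. dom_chain F0 \<Omega> F E H ch)"
    using proper_subunit_subunit_trans dom_chain_subunit assms(8) by blast
  then show ?thesis using assms(3,4,6) unfolding dominates_def by blast
qed

end
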